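(* For every finite set $X$ of proposals with $m=|X|\geq 3$, the rank-variance DSF $\Delta_{\mathit{var}}$ violates Uniform Reinforcement; that is, there exist a profile $R:N\to X!$ and a perfectly uniform profile $R^U:N'\to X!$ with $N\cap N'=\emptyset$ such that $\Delta_{\mathit{var}}(R)\neq\Delta_{\mathit{var}}(R\oplus R^U)$.
   Context: $X!$ is the set of strict linear orders on $X$. A profile is a function $R:N\to X!$ with $N\subset\mathbb{N}$ finite and nonempty. $\mathit{pos}^R_i(x)=1+|\{y: y \text{ ranked above } x \text{ by } R(i)\}|$. The rank-variance DSF is $\Delta_{\mathit{var}}(R)=\arg\max_{x\in X}\frac{1}{|N|}\sum_{i\in N}(\mathit{pos}^R_i(x)-\mu^R(x))^2$ where $\mu^R(x)=\frac{1}{|N|}\sum_{i\in N}\mathit{pos}^R_i(x)$. A profile is perfectly uniform if each of the $m!$ linear orders on $X$ is reported by the same number of agents. For profiles $R:N\to X!$, $R':N'\to X!$ with $N\cap N'=\emptyset$, $R\oplus R'$ is the profile on $N\cup N'$ agreeing with $R$ on $N$ and $R'$ on $N'$. A DSF $\Delta$ satisfies Uniform Reinforcement if $\Delta(R)=\Delta(R\oplus R^U)$ for every profile $R:N\to X!$ and every perfectly uniform profile $R^U:N'\to X!$ with $N\cap N'=\emptyset$. *)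

theory Defs
  imports Complex_Main
begin

text \<open>Strict linear orders on X, as relations (x, y) meaning "x is ranked above y".\<close>
definition lin_orders :: "'a set \<Rightarrow> 'a rel set" where
  "lin_orders X = {r. r \<subseteq> X \<times> X \<and> irrefl r \<and> trans r \<and> total_on X r}"

definition is_profile :: "'a set \<Rightarrow> nat set \<Rightarrow> (nat \<Rightarrow> 'a rel) \<Rightarrow> bool" where
  "is_profile X N R \<longleftrightarrow> finite N \<and> N \<noteq> {} \<and> (\<forall>i\<in>N. R i \<in> lin_orders X)"

definition pos :: "'a set \<Rightarrow> (nat \<Rightarrow> 'a rel) \<Rightarrow> nat \<Rightarrow> 'a \<Rightarrow> nat" where
  "pos X R i x = 1 + card {y \<in> X. (y, x) \<in> R i}"

definition mean_pos :: "'a set \<Rightarrow> nat set \<Rightarrow> (nat \<Rightarrow> 'a rel) \<Rightarrow> 'a \<Rightarrow> real" where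
  "mean_pos X N R x = (\<Sum>i\<in>N. real (pos X R i x)) / real (card N)"

definition rank_var :: "'a set \<Rightarrow> nat set \<Rightarrow> (nat \<Rightarrow> 'a rel) \<Rightarrow> 'a \<Rightarrow> real" where
  "rank_var X N R x = (\<Sum>i\<in>N. (real (pos X R i x) - mean_pos X N R x)\<^sup>2) / real (card N)"

definition Delta_var :: "'a set \<Rightarrow> nat set \<Rightarrow> (nat \<Rightarrow> 'a rel) \<Rightarrow> 'a set" where
  "Delta_var X N R = {x \<in> X. \<forall>y\<in>X. rank_var X N R y \<le> rank_var X N R x}"

definition perfectly_uniform :: "'a set \<Rightarrow> nat set \<Rightarrow> (nat \<Rightarrow> 'a rel) \<Rightarrow> bool" where
  "perfectly_uniform X N R \<longleftrightarrow>
     (\<exists>k. \<forall>r\<in>lin_orders X. card {i \<in> N. R i = r} = k)"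

definition combine :: "nat set \<Rightarrow> (nat \<Rightarrow> 'a rel) \<Rightarrow> (nat \<Rightarrow> 'a rel) \<Rightarrow> (nat \<Rightarrow> 'a rel)" where
  "combine N R R' = (\<lambda>i. if i \<in> N then R i else R' i)"

end

theory Submission
  imports Defs
begin

text \<open>
  A single voter gives every alternative rank variance 0, so \<open>\<Delta>\<^sub>v\<^sub>a\<^sub>r\<close> selects all of X.
  Add the perfectly uniform profile in which each linear order is reported exactly once.
  If \<open>\<Delta>\<^sub>v\<^sub>a\<^sub>r\<close> still selected everything, two alternatives a and b would tie in
  variance both when the single voter ranks a first and b second and when it ranks b first
  and a second; subtracting the two equations forces the positions of a and b, summed over
  all linear orders, to add up to exactly 3 m!. But in every linear order these two
  positions add up to at least 3, and to more than 3 when a third alternative comes first.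
\<close>

lemma obtain_three_distinct:
  assumes "card X \<ge> 3"
  obtains a b c where "a \<in> X" "b \<in> X" "c \<in> X" "a \<noteq> b" "a \<noteq> c" "b \<noteq> c"
proof -
  obtain T where T: "T \<subseteq> X" "card T = 3"
    using obtain_subset_with_card_n[OF assms] by metis
  then obtain a b c where "T = {a, b, c}" "a \<noteq> b" "b \<noteq> c" "a \<noteq> c"
    unfolding card_3_iff by blast
  with T(1) show thesis
    by (intro that[of a b c]) auto
qed

definition position :: "'a set \<Rightarrow> 'a rel \<Rightarrow> 'a \<Rightarrow> nat" where
  "position X r x = 1 + card {y \<in> X. (y, x) \<in> r}"

lemma pos_eq_position: "pos X R i x = position X (R i) x"
  by (simp add: pos_def position_def)

lemma position_ge_1: "position X r x \<ge> 1"
  by (simp add: position_def)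

lemma position_eq_1_unique:
  assumes "finite X" "r \<in> lin_orders X" "a \<in> X" "b \<in> X"
    and "position X r a = 1" "position X r b = 1"
  shows "a = b"
proof (rule ccontr)
  assume "a \<noteq> b"
  with assms(2-4) have "(a, b) \<in> r \<or> (b, a) \<in> r"
    by (auto simp: lin_orders_def total_on_def)
  with assms show False
    by (auto simp: position_def)
qed

lemma position_pair_ge_3:
  assumes "finite X" "r \<in> lin_orders X" "a \<in> X" "b \<in> X" "a \<noteq> b"
  shows "position X r a + position X r b \<ge> 3"
  using position_eq_1_unique[OF assms(1-4)] position_ge_1[of X r a] position_ge_1[of X r b] assms(5)
  by linarith

definition order_by :: "('a \<Rightarrow> nat) \<Rightarrow> 'a set \<Rightarrow> 'a rel" where
  "order_by f X = {(x, y). x \<in> X \<and> y \<in> X \<and> f x < f y}"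

lemma order_by_in_lin_orders: "inj_on f X \<Longrightarrow> order_by f X \<in> lin_orders X"
  unfolding lin_orders_def irrefl_def trans_def total_on_def order_by_def
  by (auto simp: nat_neq_iff) (metis inj_onD linorder_neqE_nat)

lemma position_order_by: "x \<in> X \<Longrightarrow> position X (order_by f X) x = 1 + card {y \<in> X. f y < f x}"
  by (simp add: position_def order_by_def conj_commute)

lemma finite_lin_orders: "finite X \<Longrightarrow> finite (lin_orders X)"
  by (rule finite_subset[of _ "Pow (X \<times> X)"]) (auto simp: lin_orders_def)

lemma lin_orders_nonempty:
  assumes "finite X"
  shows "lin_orders X \<noteq> {}"
proof -
  obtain f :: "'a \<Rightarrow> nat" where "inj_on f X"
    using finite_imp_inj_to_nat_seg[OF assms] by blast
  then show ?thesis
    using order_by_in_lin_orders by blast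
qed

lemma exists_lin_order_top_two:
  assumes "finite X" "a \<in> X" "b \<in> X" "a \<noteq> b"
  obtains r where "r \<in> lin_orders X" "position X r a = 1" "position X r b = 2"
proof -
  obtain g :: "'a \<Rightarrow> nat" where g: "inj_on g X"
    using finite_imp_inj_to_nat_seg[OF assms(1)] by blast
  define f where "f x = (if x = a then 0 else if x = b then 1 else g x + 2)" for x
  have "inj_on f X"
    using g by (auto simp: inj_on_def f_def)
  moreover have "{y \<in> X. f y < f a} = {}" and "{y \<in> X. f y < f b} = {a}"
    using assms by (auto simp: f_def)
  ultimately show thesis
    using that[of "order_by f X"] assms by (simp add: order_by_in_lin_orders position_order_by)
qed

lemma sum_position_pair_gt:
  assumes "finite X" "a \<in> X" "b \<in> X" "c \<in> X" "a \<noteq> b" "a \<noteq> c" "b \<noteq> c"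
  shows "3 * real (card (lin_orders X))
    < (\<Sum>r\<in>lin_orders X. real (position X r a)) + (\<Sum>r\<in>lin_orders X. real (position X r b))"
proof -
  have "finite (lin_orders X)"
    using assms(1) by (rule finite_lin_orders)
  moreover have "\<forall>r\<in>lin_orders X. 3 \<le> real (position X r a) + real (position X r b)"
    using position_pair_ge_3[OF assms(1) _ assms(2,3,5)] by (metis of_nat_add of_nat_le_iff of_nat_numeral)
  moreover have "\<exists>r\<in>lin_orders X. 3 < real (position X r a) + real (position X r b)"
  proof -
    obtain r where r: "r \<in> lin_orders X" "position X r c = 1" "position X r a = 2"
      using exists_lin_order_top_two[OF assms(1,4,2)] assms(6) by metis
    then have "position X r b \<noteq> 1"
      using position_eq_1_unique[OF assms(1) r(1) assms(3,4)] assms(7) by auto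
    with r show ?thesis
      using position_ge_1[of X r b] by force
  qed
  ultimately have "(\<Sum>r\<in>lin_orders X. 3)
      < (\<Sum>r\<in>lin_orders X. real (position X r a) + real (position X r b))"
    by (rule sum_strict_mono_ex1)
  then show ?thesis
    by (simp add: sum.distrib mult.commute)
qed

lemma ex_uniform_enumeration:
  assumes "finite X"
  obtains N' and RU :: "nat \<Rightarrow> 'a rel"
  where "finite N'" "0 \<notin> N'" "bij_betw RU N' (lin_orders X)"
proof -
  obtain RU where "bij_betw RU {1..card (lin_orders X)} (lin_orders X)"
    using ex_bij_betw_nat_finite_1[OF finite_lin_orders[OF assms]] by blast
  then show thesis
    using that[of "{1..card (lin_orders X)}"] by simp
qed

lemma is_profile_if_bij_betw:
  assumes "finite X" "finite N'" "bij_betw RU N' (lin_orders X)"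
  shows "is_profile X N' RU"
proof -
  have "RU ` N' = lin_orders X"
    using assms(3) by (rule bij_betw_imp_surj_on)
  then show ?thesis
    using assms(2) lin_orders_nonempty[OF assms(1)] unfolding is_profile_def by auto
qed

lemma perfectly_uniform_if_bij_betw:
  assumes "bij_betw RU N' (lin_orders X)"
  shows "perfectly_uniform X N' RU"
proof -
  have "card {i \<in> N'. RU i = r} = 1" if "r \<in> lin_orders X" for r
  proof -
    have "r \<in> RU ` N'"
      using assms that by (simp add: bij_betw_def)
    then obtain i where "i \<in> N'" "r = RU i"
      by blast
    moreover have "inj_on RU N'"
      using assms by (rule bij_betw_imp_inj_on)
    ultimately have "{j \<in> N'. RU j = r} = {i}"
      by (auto simp: inj_on_def)
    then show ?thesis by simp
  qed
  then show ?thesis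
    unfolding perfectly_uniform_def by blast
qed

lemma sum_sq_dev_mean:
  fixes f :: "'i \<Rightarrow> real"
  assumes "finite N" "N \<noteq> {}"
  shows "(\<Sum>i\<in>N. (f i - (\<Sum>j\<in>N. f j) / card N)\<^sup>2) / card N
       = (\<Sum>i\<in>N. (f i)\<^sup>2) / card N - ((\<Sum>j\<in>N. f j) / card N)\<^sup>2"
proof -
  define n where "n = real (card N)"
  define S where "S = (\<Sum>j\<in>N. f j)"
  have "n > 0"
    using assms by (simp add: n_def card_gt_0_iff)
  have "(\<Sum>i\<in>N. (f i - S / n)\<^sup>2) = (\<Sum>i\<in>N. (f i)\<^sup>2 - 2 * (S / n) * f i + (S / n)\<^sup>2)"
    by (rule sum.cong[OF refl]) (simp add: power2_diff)
  also have "\<dots> = (\<Sum>i\<in>N. (f i)\<^sup>2) - (\<Sum>i\<in>N. 2 * (S / n) * f i) + (\<Sum>i\<in>N. (S / n)\<^sup>2)"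
    by (simp only: sum.distrib sum_subtractf)
  also have "(\<Sum>i\<in>N. 2 * (S / n) * f i) = 2 * (S / n) * S"
    unfolding S_def by (rule sum_distrib_left[symmetric])
  also have "(\<Sum>i\<in>N. (S / n)\<^sup>2) = n * (S / n)\<^sup>2"
    unfolding n_def by simp
  finally have "(\<Sum>i\<in>N. (f i - S / n)\<^sup>2) / n = (\<Sum>i\<in>N. (f i)\<^sup>2) / n - (S / n)\<^sup>2"
    using \<open>n > 0\<close> by (simp add: field_simps power2_eq_square)
  then show ?thesis
    by (simp add: S_def n_def)
qed

lemma rank_var_add_uniform:
  assumes "finite N'" "i \<notin> N'" "bij_betw RU N' (lin_orders X)"
  shows "rank_var X ({i} \<union> N') (combine {i} (\<lambda>_. r) RU) x
    = ((real (position X r x))\<^sup>2 + (\<Sum>s\<in>lin_orders X. (real (position X s x))\<^sup>2)) / real (card N' + 1)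
      - ((real (position X r x) + (\<Sum>s\<in>lin_orders X. real (position X s x))) / real (card N' + 1))\<^sup>2"
proof -
  have sum_combine: "(\<Sum>j\<in>{i} \<union> N'. h (combine {i} (\<lambda>_. r) RU j)) = h r + (\<Sum>s\<in>lin_orders X. h s)"
    for h :: "'a rel \<Rightarrow> real"
  proof -
    have "(\<Sum>j\<in>N'. h (combine {i} (\<lambda>_. r) RU j)) = (\<Sum>j\<in>N'. h (RU j))"
      using assms(2) by (intro sum.cong) (auto simp: combine_def)
    also have "\<dots> = (\<Sum>s\<in>lin_orders X. h s)"
      using assms(3) by (rule sum.reindex_bij_betw)
    finally show ?thesis
      using assms(1,2) by (simp add: combine_def)
  qed
  have "finite ({i} \<union> N')" "{i} \<union> N' \<noteq> {}"
    using assms(1) by simp_all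
  then have "rank_var X ({i} \<union> N') (combine {i} (\<lambda>_. r) RU) x
    = (\<Sum>j\<in>{i} \<union> N'. (real (position X (combine {i} (\<lambda>_. r) RU j) x))\<^sup>2) / real (card ({i} \<union> N'))
      - ((\<Sum>j\<in>{i} \<union> N'. real (position X (combine {i} (\<lambda>_. r) RU j) x)) / real (card ({i} \<union> N')))\<^sup>2"
    unfolding rank_var_def mean_pos_def pos_eq_position by (rule sum_sq_dev_mean)
  also have "card ({i} \<union> N') = card N' + 1"
    using assms(1,2) by simp
  finally show ?thesis
    unfolding sum_combine[of "\<lambda>s. (real (position X s x))\<^sup>2"] sum_combine[of "\<lambda>s. real (position X s x)"] .
qed

lemma Delta_var_singleton: "Delta_var X {i} R = X"
  by (simp add: Delta_var_def rank_var_def mean_pos_def)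

lemma rank_var_eq_if_Delta_var_eq:
  assumes "Delta_var X N R = X" "a \<in> X" "b \<in> X"
  shows "rank_var X N R a = rank_var X N R b"
  using assms unfolding Delta_var_def by (blast intro: order_antisym)

lemma swapped_ties_imp_sum_eq:
  fixes n p q Pa Pb Qa Qb :: real
  assumes "n \<noteq> 0" "p \<noteq> q"
    and "(p\<^sup>2 + Qa) / n - ((p + Pa) / n)\<^sup>2 = (q\<^sup>2 + Qb) / n - ((q + Pb) / n)\<^sup>2"
    and "(q\<^sup>2 + Qa) / n - ((q + Pa) / n)\<^sup>2 = (p\<^sup>2 + Qb) / n - ((p + Pb) / n)\<^sup>2"
  shows "Pa + Pb = (n - 1) * (p + q)"
proof -
  have scaled: "x / n - (y / n)\<^sup>2 = (n * x - y\<^sup>2) / n\<^sup>2" for x y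
    using assms(1) by (simp add: field_simps power2_eq_square)
  have "n * (p\<^sup>2 + Qa) - (p + Pa)\<^sup>2 = n * (q\<^sup>2 + Qb) - (q + Pb)\<^sup>2"
   and "n * (q\<^sup>2 + Qa) - (q + Pa)\<^sup>2 = n * (p\<^sup>2 + Qb) - (p + Pb)\<^sup>2"
    using assms(1,3,4) unfolding scaled by simp_all
  then have "(p - q) * ((n - 1) * (p + q) - (Pa + Pb)) = 0"
    by (simp add: algebra_simps power2_eq_square)
  with assms(2) have "(n - 1) * (p + q) - (Pa + Pb) = 0"
    by simp
  then show ?thesis
    by simp
qed

lemma sum_positions_if_top_two_tie:
  assumes U: "finite N'" "i \<notin> N'" "bij_betw RU N' (lin_orders X)"
    and r1: "position X r1 a = 1" "position X r1 b = 2"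
    and r2: "position X r2 b = 1" "position X r2 a = 2"
    and tie1: "rank_var X ({i} \<union> N') (combine {i} (\<lambda>_. r1) RU) a
             = rank_var X ({i} \<union> N') (combine {i} (\<lambda>_. r1) RU) b"
    and tie2: "rank_var X ({i} \<union> N') (combine {i} (\<lambda>_. r2) RU) a
             = rank_var X ({i} \<union> N') (combine {i} (\<lambda>_. r2) RU) b"
  shows "(\<Sum>r\<in>lin_orders X. real (position X r a)) + (\<Sum>r\<in>lin_orders X. real (position X r b))
       = 3 * real (card (lin_orders X))"
proof -
  define n where "n = real (card N' + 1)"
  define P where "P x = (\<Sum>r\<in>lin_orders X. real (position X r x))" for x
  define Q where "Q x = (\<Sum>r\<in>lin_orders X. (real (position X r x))\<^sup>2)" for x
  have "(1\<^sup>2 + Q a) / n - ((1 + P a) / n)\<^sup>2 = (2\<^sup>2 + Q b) / n - ((2 + P b) / n)\<^sup>2"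
    using tie1 r1 unfolding rank_var_add_uniform[OF U] n_def P_def Q_def by simp
  moreover have "(2\<^sup>2 + Q a) / n - ((2 + P a) / n)\<^sup>2 = (1\<^sup>2 + Q b) / n - ((1 + P b) / n)\<^sup>2"
    using tie2 r2 unfolding rank_var_add_uniform[OF U] n_def P_def Q_def by simp
  ultimately have "P a + P b = (n - 1) * (1 + 2)"
    by (rule swapped_ties_imp_sum_eq[rotated 2]) (simp_all add: n_def)
  moreover have "card N' = card (lin_orders X)"
    using U(3) by (rule bij_betw_same_card)
  ultimately show ?thesis
    by (simp add: P_def n_def)
qed

theorem proposition3:
  fixes X :: "'a set"
  assumes "finite X" and "card X \<ge> 3"
  shows "\<exists>N R N' RU.
           is_profile X N R \<and> is_profile X N' RU \<and> perfectly_uniform X N' RU \<and>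
           N \<inter> N' = {} \<and>
           Delta_var X N R \<noteq> Delta_var X (N \<union> N') (combine N R RU)"
proof -
  obtain a b c where abc: "a \<in> X" "b \<in> X" "c \<in> X" "a \<noteq> b" "a \<noteq> c" "b \<noteq> c"
    using assms(2) by (rule obtain_three_distinct)
  obtain N' :: "nat set" and RU where U: "finite N'" "0 \<notin> N'" "bij_betw RU N' (lin_orders X)"
    using ex_uniform_enumeration[OF assms(1)] .
  obtain r1 where r1: "r1 \<in> lin_orders X" "position X r1 a = 1" "position X r1 b = 2"
    using exists_lin_order_top_two[OF assms(1) abc(1,2,4)] .
  obtain r2 where r2: "r2 \<in> lin_orders X" "position X r2 b = 1" "position X r2 a = 2"
    using exists_lin_order_top_two[OF assms(1) abc(2,1)] abc(4) by metis
  have profile: "is_profile X {0} (\<lambda>_. r)" if "r \<in> lin_orders X" for r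
    using that by (simp add: is_profile_def)
  have uniform: "is_profile X N' RU" "perfectly_uniform X N' RU" "{0} \<inter> N' = {}"
    using is_profile_if_bij_betw[OF assms(1) U(1,3)] perfectly_uniform_if_bij_betw[OF U(3)] U(2)
    by simp_all
  show ?thesis
  proof (rule ccontr)
    assume "\<not> ?thesis"
    then have "Delta_var X {0} (\<lambda>_. r) = Delta_var X ({0} \<union> N') (combine {0} (\<lambda>_. r) RU)"
      if "r \<in> lin_orders X" for r
      using profile[OF that] uniform by blast
    then have "Delta_var X ({0} \<union> N') (combine {0} (\<lambda>_. r) RU) = X" if "r \<in> lin_orders X" for r
      using that by (simp add: Delta_var_singleton)
    then have "rank_var X ({0} \<union> N') (combine {0} (\<lambda>_. r) RU) a
             = rank_var X ({0} \<union> N') (combine {0} (\<lambda>_. r) RU) b" if "r \<in> lin_orders X" for r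
      using rank_var_eq_if_Delta_var_eq[OF _ abc(1,2)] that by blast
    then have "(\<Sum>r\<in>lin_orders X. real (position X r a)) + (\<Sum>r\<in>lin_orders X. real (position X r b))
             = 3 * real (card (lin_orders X))"
      using sum_positions_if_top_two_tie[OF U r1(2,3) r2(2,3)] r1(1) r2(1) by blast
    with sum_position_pair_gt[OF assms(1) abc] show False
      by simp
  qed
qed

end
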